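(* Let $\mathscr G\alpha(\zeta,q)=\sum_{n=0}^\infty\zeta^n\sum_{s=0}^\infty q^s\alpha(n,s)$. This double series converges absolutely for all $\zeta,q\in\mathbb C$ with $|\zeta|<1$ and $|q|\le1$, and for such $\zeta,q$, \[ \mathscr G\alpha(\zeta,q)=\frac{2\zeta(1-q)\,[N-\zeta(N-2+2q)]^{-1}}{N(1-\zeta)^2\,\mathrm{tr}\big((N-\zeta(N-2+2Q))^{-1}\big)}. \]
   Context: $E$ is a finite set with $N=\#E>8$ elements; $Q$ is an irreducible stochastic matrix on $E$ with $Q(x,y)=Q(y,x)$ for all $x,y$ and $\mathrm{tr}(Q)=0$; $I$ is the identity matrix, and $(N-\zeta(N-2+2Q))^{-1}$ is the matrix inverse of $NI-\zeta((N-2)I+2Q)$. The function $\alpha:\mathbb Z_+\times\mathbb Z_+\to\mathbb R$ is defined by $\alpha(0,s)=0$ for all $s$ and, for $n\in\mathbb Z_+$, $\alpha(n+1,0)=\frac2{N^2}+\alpha(n,0)+\frac2{N^2}\sum_{s\ge1}\alpha(n,s)\mathrm{tr}(Q^s)$, $\alpha(n+1,1)=-\frac2{N^2}+\frac{N-2}N\alpha(n,1)-\frac2{N^2}\sum_{s\ge1}\alpha(n,s)\mathrm{tr}(Q^s)$, $\alpha(n+1,s)=\frac{N-2}N\alpha(n,s)+\frac2N\alpha(n,s-1)$ for $s\ge2$ (so $\alpha(n,s)=0$ for $s\ge n+1$). *)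

theory Defs
  imports "HOL-Analysis.Analysis"
begin

primrec matpow :: "'a::semiring_1^'n^'n \<Rightarrow> nat \<Rightarrow> 'a^'n^'n" where
  "matpow A 0 = mat 1"
| "matpow A (Suc n) = A ** matpow A n"

definition stochastic :: "real^'e^'e \<Rightarrow> bool" where
  "stochastic Q \<longleftrightarrow> (\<forall>x y. Q$x$y \<ge> 0) \<and> (\<forall>x. (\<Sum>y\<in>UNIV. Q$x$y) = 1)"

definition irreducible_mat :: "real^'e^'e \<Rightarrow> bool" where
  "irreducible_mat Q \<longleftrightarrow> (\<forall>x y. \<exists>n. matpow Q n $x$y > 0)"

definition symmetric_mat :: "real^'e^'e \<Rightarrow> bool" where
  "symmetric_mat Q \<longleftrightarrow> (\<forall>x y. Q$x$y = Q$y$x)"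

primrec alpha_row :: "real^'e::finite^'e \<Rightarrow> nat \<Rightarrow> nat \<Rightarrow> real" where
  "alpha_row Q 0 = (\<lambda>s. 0)"
| "alpha_row Q (Suc n) =
    (let N = real CARD('e); a = alpha_row Q n;
         S = (\<Sum>s. a (Suc s) * trace (matpow Q (Suc s)))
     in (\<lambda>s. if s = 0 then 2 / N^2 + a 0 + 2 / N^2 * S
             else if s = 1 then - 2 / N^2 + (N - 2) / N * a 1 - 2 / N^2 * S
             else (N - 2) / N * a s + 2 / N * a (s - 1)))"

definition alpha :: "real^'e::finite^'e \<Rightarrow> nat \<Rightarrow> nat \<Rightarrow> real" where
  "alpha Q n s = alpha_row Q n s"

definition complex_mat :: "real^'e^'e \<Rightarrow> complex^'e^'e" where
  "complex_mat Q = (\<chi> i j. complex_of_real (Q$i$j))"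

definition Galpha :: "real^'e::finite^'e \<Rightarrow> complex \<Rightarrow> complex \<Rightarrow> complex" where
  "Galpha Q \<zeta> q = (\<Sum>n. \<zeta>^n * (\<Sum>s. q^s * complex_of_real (alpha Q n s)))"

end

theory Submission
  imports Defs
begin

text \<open>
  Write P_n(X) = sum_s alpha(n,s) X^s (alpha_poly, alpha_matpoly). The recursion for alpha says
  P_(n+1)(X) = c_n (1 - X) + R(X) P_n(X), where R(X) = ((N - 2) + 2 X) / N (lazy_walk) and
  c_n = 2/N^2 (1 + tr P_n(Q)) (alpha_forcing). Evaluated at a scalar q this gives
  G = zeta ((1 - q) C + R(q) G) for G = Galpha and C = sum_n c_n zeta^n (forcing_gf); evaluated at Q
  it gives (N - zeta (N - 2 + 2 Q)) E = N zeta C (I - Q) for E = sum_n zeta^n P_n(Q) (matpoly_gf),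
  while C = 2/N^2 (1/(1 - zeta) + tr E). As 2 zeta (I - Q) = (N - zeta (N - 2 + 2 Q)) - N (1 - zeta) I,
  taking traces determines C, and then G.

  For convergence, unrolling the recursion gives P_n(Q) = sum_(k<n) c_k (I - Q) R(Q)^(n-1-k), so c_n
  satisfies a renewal equation whose kernel tr ((I - Q) R(Q)^m) is nonnegative (I - Q is positive
  semidefinite and R(Q) is symmetric) and telescopes to a total mass of at most N^2/2. Hence
  |c_n| <= 2 (n + 1) / N^2 and sum_s |alpha(n,s)| <= (n + 1) (n + 2).
\<close>

section \<open>Matrix algebra\<close>

lemma matrix_add_rdistrib: "((A::'a::comm_ring_1^'n^'m) + B) ** (C::'a^'p^'n) = A ** C + B ** C"
  by (simp add: matrix_matrix_mult_def vec_eq_iff sum.distrib distrib_right)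

lemma matrix_diff_rdistrib: "((A::'a::comm_ring_1^'n^'m) - B) ** (C::'a^'p^'n) = A ** C - B ** C"
  by (simp add: matrix_matrix_mult_def vec_eq_iff sum_subtractf left_diff_distrib)

lemma matrix_diff_ldistrib: "(A::'a::comm_ring_1^'n^'m) ** ((B::'a^'p^'n) - C) = A ** B - A ** C"
  by (simp add: matrix_matrix_mult_def vec_eq_iff sum_subtractf right_diff_distrib)

lemma mat_component: "mat a $ i $ j = (if i = j then a else 0)"
  by (simp add: mat_def)

lemma matrix_mult_component: "(A ** B) $ i $ j = (\<Sum>k\<in>UNIV. A $ i $ k * B $ k $ j)"
  by (simp add: matrix_matrix_mult_def)

lemma mat_mult_component: "(mat (a::'a::comm_ring_1) ** (B::'a^'n^'m)) $ i $ j = a * B $ i $ j"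
  by (simp add: matrix_mult_component mat_component if_distrib if_distribR cong: if_cong)

lemma mat_mult_mat: "mat a ** mat b = mat (a * b :: 'a::comm_ring_1)"
  by (simp add: vec_eq_iff mat_mult_component mat_component)

lemma mat_mult_commute: "mat a ** A = A ** (mat a :: 'a::comm_ring_1^'n^'n)"
  by (simp add: vec_eq_iff mat_mult_component matrix_mult_component mat_component
      if_distrib if_distribR mult.commute cong: if_cong)

lemma trace_scaleR: "trace (c *\<^sub>R (A::real^'n^'n)) = c * trace A"
  by (simp add: trace_def sum_distrib_left)

lemma trace_sum: "trace (\<Sum>x\<in>S. (f x :: 'a::semiring_1^'n^'n)) = (\<Sum>x\<in>S. trace (f x))"
  by (simp add: trace_def sum_component sum.swap[of _ S])

lemma trace_mat: "trace (mat a :: 'a::comm_ring_1^'n^'n) = of_nat CARD('n) * a"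
  by (simp add: trace_def mat_component)

lemma trace_mat_mult: "trace (mat a ** A) = a * trace (A :: 'a::comm_ring_1^'n^'n)"
  by (simp add: trace_def mat_mult_component sum_distrib_left)

lemma complex_mat_component [simp]: "complex_mat A $ i $ j = complex_of_real (A $ i $ j)"
  by (simp add: complex_mat_def)

lemma linear_matrix_mult_left: "linear (\<lambda>B::real^'n^'m. (A::real^'m^'k) ** B)"
  by (rule linearI) (simp_all add: matrix_add_ldistrib matrix_scalar_ac scalar_matrix_assoc)

lemma matpow_add: "matpow A (a + b) = matpow A a ** matpow A b"
  by (induction a) (simp_all add: matrix_mul_assoc)

lemma matpow_commute: "A ** matpow A k = matpow A k ** A"
  by (induction k) (simp_all add: matrix_mul_assoc[symmetric], simp add: matrix_mul_assoc)

lemma transpose_matpow: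
  fixes A :: "'a::comm_semiring_1^'n^'n"
  shows "transpose A = A \<Longrightarrow> transpose (matpow A k) = matpow A k"
  by (induction k) (simp_all add: matrix_transpose_mul matpow_commute)

lemma matrix_inv_mult_left: "invertible A \<Longrightarrow> matrix_inv A ** A = mat 1"
  unfolding invertible_def matrix_inv_def by (metis (mono_tags, lifting) someI_ex)

lemma matrix_inv_mult_right: "invertible A \<Longrightarrow> A ** matrix_inv A = mat 1"
  unfolding invertible_def matrix_inv_def by (metis (mono_tags, lifting) someI_ex)

lemma ex_max_norm_component:
  fixes v :: "'a::real_normed_vector^'n::finite"
  obtains i where "\<And>k. norm (v $ k) \<le> norm (v $ i)"
proof -
  have "Max (range (\<lambda>k. norm (v $ k))) \<in> range (\<lambda>k. norm (v $ k))" by (rule Max_in) auto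
  then obtain i where i: "norm (v $ i) = Max (range (\<lambda>k. norm (v $ k)))"
    by (metis (no_types, lifting) imageE)
  show ?thesis by (rule that[of i]) (unfold i, auto intro: Max_ge)
qed

section \<open>Symmetric stochastic matrices and the lazy walk\<close>

lemma symmetric_mat_iff_transpose: "symmetric_mat A \<longleftrightarrow> transpose A = A"
  by (auto simp: symmetric_mat_def transpose_def vec_eq_iff)

lemma symmetric_mat_square: "symmetric_mat Q \<Longrightarrow> symmetric_mat (Q ** Q)"
  by (simp add: symmetric_mat_def matrix_mult_component mult.commute)

lemma stochastic_mult:
  fixes A B :: "real^'n::finite^'n"
  assumes "stochastic A" "stochastic B"
  shows "stochastic (A ** B)"
  unfolding stochastic_def
proof (intro conjI allI)
  fix x y
  show "0 \<le> (A ** B) $ x $ y"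
    using assms by (simp add: stochastic_def matrix_mult_component sum_nonneg)
next
  fix x
  have "(\<Sum>y\<in>UNIV. (A ** B) $ x $ y) = (\<Sum>k\<in>UNIV. A $ x $ k * (\<Sum>y\<in>UNIV. B $ k $ y))"
    by (simp add: matrix_mult_component sum_distrib_left) (rule sum.swap)
  then show "(\<Sum>y\<in>UNIV. (A ** B) $ x $ y) = 1"
    using assms by (simp add: stochastic_def)
qed

lemma stochastic_matpow:
  fixes A :: "real^'n::finite^'n"
  shows "stochastic A \<Longrightarrow> stochastic (matpow A k)"
proof (induction k)
  case 0
  have "(\<Sum>y\<in>UNIV. (if x = y then 1 else 0 :: real)) = 1" for x :: 'n by simp
  then show ?case by (simp add: stochastic_def mat_component)
qed (simp add: stochastic_mult)

lemma stochastic_component_le_1: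
  fixes A :: "real^'n::finite^'n"
  assumes "stochastic A"
  shows "A $ x $ y \<le> 1"
proof -
  have "A $ x $ y \<le> (\<Sum>y\<in>UNIV. A $ x $ y)"
    using assms by (intro member_le_sum) (auto simp: stochastic_def)
  then show ?thesis using assms by (simp add: stochastic_def)
qed

lemma norm_stochastic_average_le:
  fixes Q :: "real^'n::finite^'n" and v :: "complex^'n"
  assumes Q: "stochastic Q" and v: "\<And>k. norm (v $ k) \<le> m"
  shows "norm (\<Sum>k\<in>UNIV. complex_of_real (Q $ i $ k) * v $ k) \<le> m"
proof -
  have "norm (\<Sum>k\<in>UNIV. complex_of_real (Q $ i $ k) * v $ k) \<le> (\<Sum>k\<in>UNIV. Q $ i $ k * m)"
    using Q v by (intro order_trans[OF norm_sum sum_mono])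
      (simp add: norm_mult stochastic_def mult_left_mono)
  also have "\<dots> = m"
    using Q by (simp add: stochastic_def sum_distrib_right[symmetric])
  finally show ?thesis .
qed

lemma stochastic_quadratic_form_le:
  fixes P :: "real^'n::finite^'n" and v :: "'n \<Rightarrow> real"
  assumes "stochastic P" "symmetric_mat P"
  shows "(\<Sum>y\<in>UNIV. \<Sum>z\<in>UNIV. P$y$z * (v y * v z)) \<le> (\<Sum>y\<in>UNIV. (v y)^2)"
proof -
  have nn: "\<forall>x y. P$x$y \<ge> 0" and rs: "\<forall>x. (\<Sum>y\<in>UNIV. P$x$y) = 1" and sy: "\<forall>x y. P$x$y = P$y$x"
    using assms by (auto simp: stochastic_def symmetric_mat_def)
  have "(\<Sum>y\<in>UNIV. \<Sum>z\<in>UNIV. P$y$z * (v y * v z))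
      \<le> (\<Sum>y\<in>UNIV. \<Sum>z\<in>UNIV. P$y$z * (((v y)^2 + (v z)^2) / 2))"
  proof (intro sum_mono mult_left_mono)
    fix y z
    show "v y * v z \<le> ((v y)^2 + (v z)^2) / 2"
      using sum_squares_ge_zero[of "v y - v z" 0] by (simp add: power2_eq_square algebra_simps)
    show "0 \<le> P $ y $ z" using nn by auto
  qed
  also have "\<dots> = ((\<Sum>y\<in>UNIV. (v y)^2 * (\<Sum>z\<in>UNIV. P$y$z))
                  + (\<Sum>z\<in>UNIV. (v z)^2 * (\<Sum>y\<in>UNIV. P$y$z))) / 2"
  proof -
    have "(\<Sum>y\<in>UNIV. \<Sum>z\<in>UNIV. P$y$z * (((v y)^2 + (v z)^2) / 2)) =
       ((\<Sum>y\<in>UNIV. \<Sum>z\<in>UNIV. (v y)^2 * P$y$z) + (\<Sum>y\<in>UNIV. \<Sum>z\<in>UNIV. (v z)^2 * P$y$z)) / 2"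
      by (simp add: sum_divide_distrib sum.distrib add_divide_distrib algebra_simps)
    also have "(\<Sum>y\<in>UNIV. \<Sum>z\<in>UNIV. (v z)^2 * P$y$z) = (\<Sum>z\<in>UNIV. \<Sum>y\<in>UNIV. (v z)^2 * P$y$z)"
      by (rule sum.swap)
    finally show ?thesis by (simp add: sum_distrib_left)
  qed
  also have "\<dots> = (\<Sum>y\<in>UNIV. (v y)^2)"
  proof -
    have "(\<Sum>y\<in>UNIV. P$y$z) = 1" for z
      using rs sy by (metis (no_types, lifting) sum.cong)
    then show ?thesis using rs by simp
  qed
  finally show ?thesis .
qed

lemma trace_laplacian_form_nonneg:
  fixes P A :: "real^'n::finite^'n"
  assumes "stochastic P" "symmetric_mat P"
  shows "0 \<le> trace (transpose A ** ((mat 1 - P) ** A))"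
proof -
  have diag: "(transpose A ** ((mat 1 - P) ** A)) $ i $ i
      = (\<Sum>k\<in>UNIV. (A$k$i)^2) - (\<Sum>k\<in>UNIV. \<Sum>z\<in>UNIV. P$k$z * (A$k$i * A$z$i))" for i
  proof -
    have e: "((mat 1 - P) ** A) $ k $ i = A$k$i - (\<Sum>z\<in>UNIV. P$k$z * A$z$i)" for k
      by (simp add: matrix_diff_rdistrib) (simp add: matrix_mult_component)
    have "(transpose A ** ((mat 1 - P) ** A)) $ i $ i
        = (\<Sum>k\<in>UNIV. A$k$i * (A$k$i - (\<Sum>z\<in>UNIV. P$k$z * A$z$i)))"
      by (subst matrix_mult_component) (simp add: e transpose_def)
    also have "\<dots> = (\<Sum>k\<in>UNIV. (A$k$i)^2) - (\<Sum>k\<in>UNIV. \<Sum>z\<in>UNIV. P$k$z * (A$k$i * A$z$i))"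
      by (simp add: right_diff_distrib sum_subtractf sum_distrib_left power2_eq_square mult_ac)
    finally show ?thesis .
  qed
  show ?thesis
    unfolding trace_def diag
    by (intro sum_nonneg) (simp add: stochastic_quadratic_form_le[OF assms])
qed

lemma trace_laplacian_square_nonneg:
  fixes P X :: "real^'n::finite^'n"
  assumes "stochastic P" "symmetric_mat P" "transpose X = X"
  shows "0 \<le> trace ((mat 1 - P) ** X ** X)"
proof -
  have "trace ((mat 1 - P) ** X ** X) = trace (transpose X ** ((mat 1 - P) ** X))"
    using assms(3) by (metis trace_mul_sym)
  then show ?thesis using trace_laplacian_form_nonneg[OF assms(1,2)] by simp
qed

definition laplacian :: "real^'e^'e \<Rightarrow> real^'e^'e" where
  "laplacian Q = mat 1 - Q"

definition lazy_walk :: "real^'e::finite^'e \<Rightarrow> real^'e^'e" where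
  "lazy_walk Q = ((real CARD('e) - 2) / real CARD('e)) *\<^sub>R mat 1 + (2 / real CARD('e)) *\<^sub>R Q"

lemma lazy_walk_component:
  fixes Q :: "real^'e::finite^'e"
  shows "lazy_walk Q $ x $ y
    = (if x = y then (real CARD('e) - 2) / real CARD('e) else 0) + 2 / real CARD('e) * Q $ x $ y"
  by (simp add: lazy_walk_def mat_component)

lemma stochastic_lazy_walk:
  fixes Q :: "real^'e::finite^'e"
  assumes "stochastic Q" "2 \<le> CARD('e)"
  shows "stochastic (lazy_walk Q)"
proof -
  define N where "N = real CARD('e)"
  have "(\<Sum>y\<in>UNIV. lazy_walk Q $ x $ y) = (N - 2) / N + 2 / N" for x
  proof -
    have "(\<Sum>y\<in>UNIV. 2 / N * Q $ x $ y) = 2 / N"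
      unfolding sum_distrib_left[symmetric] using assms(1) by (simp add: stochastic_def)
    then show ?thesis by (simp add: lazy_walk_component N_def sum.distrib)
  qed
  moreover have "(N - 2) / N + 2 / N = 1" by (simp add: N_def field_simps)
  ultimately show ?thesis
    using assms by (auto simp: stochastic_def lazy_walk_component N_def intro!: add_nonneg_nonneg)
qed

lemma symmetric_lazy_walk: "symmetric_mat Q \<Longrightarrow> symmetric_mat (lazy_walk Q)"
  by (simp add: symmetric_mat_def lazy_walk_component)

lemma laplacian_lazy_walk_commute: "lazy_walk Q ** laplacian Q = laplacian Q ** lazy_walk Q"
proof -
  have "Q ** lazy_walk Q = lazy_walk Q ** Q"
    unfolding lazy_walk_def
    by (simp add: matrix_add_rdistrib matrix_add_ldistrib matrix_scalar_ac scalar_matrix_assoc[symmetric])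
  then show ?thesis unfolding laplacian_def by (simp add: matrix_diff_rdistrib matrix_diff_ldistrib)
qed

lemma lazy_walk_mult_laplacian_matpow:
  "lazy_walk Q ** (laplacian Q ** matpow (lazy_walk Q) m) = laplacian Q ** matpow (lazy_walk Q) (Suc m)"
  by (simp add: matrix_mul_assoc laplacian_lazy_walk_commute)

lemma laplacian_eq_lazy_walk:
  fixes Q :: "real^'e::finite^'e"
  shows "laplacian Q = (real CARD('e) / 2) *\<^sub>R (mat 1 - lazy_walk Q)"
  by (simp add: vec_eq_iff laplacian_def lazy_walk_component mat_component field_simps)

lemma laplacian_mult_lazy_walk:
  fixes Q :: "real^'e::finite^'e"
  defines "N \<equiv> real CARD('e)"
  shows "laplacian Q ** lazy_walk Q = ((N - 4) / N) *\<^sub>R laplacian Q + (2 / N) *\<^sub>R laplacian (Q ** Q)"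
proof -
  have "laplacian Q ** lazy_walk Q = ((N - 2) / N) *\<^sub>R (mat 1 - Q) + (2 / N) *\<^sub>R (Q - Q ** Q)"
    unfolding laplacian_def lazy_walk_def N_def
    by (simp add: matrix_diff_rdistrib matrix_add_ldistrib matrix_scalar_ac
        scalar_matrix_assoc[symmetric] algebra_simps)
  moreover have "(N - 2) / N = (N - 4) / N + 2 / N" by (simp add: N_def field_simps)
  ultimately show ?thesis by (simp add: laplacian_def algebra_simps)
qed

definition laplacian_moment :: "real^'e::finite^'e \<Rightarrow> nat \<Rightarrow> real" where
  "laplacian_moment Q m = trace (laplacian Q ** matpow (lazy_walk Q) m)"

text \<open>For even m the moment is tr (X (I - Q) X) with X = R(Q)^(m/2) symmetric; for odd m split
  (I - Q) R(Q) into the Laplacians of Q and Q^2, whose coefficients are nonnegative once N >= 4.\<close>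

lemma laplacian_moment_nonneg:
  fixes Q :: "real^'e::finite^'e"
  assumes Q: "stochastic Q" "symmetric_mat Q" "4 \<le> CARD('e)"
  shows "0 \<le> laplacian_moment Q m"
proof -
  define X where "X k = matpow (lazy_walk Q) k" for k
  have X: "transpose (X k) = X k" for k
    unfolding X_def by (intro transpose_matpow) (simp add: symmetric_lazy_walk[OF Q(2)]
        flip: symmetric_mat_iff_transpose)
  have QQ: "stochastic (Q ** Q)" "symmetric_mat (Q ** Q)"
    using Q by (simp_all add: stochastic_mult symmetric_mat_square)
  show ?thesis
  proof (cases "even m")
    case True
    then obtain k where "m = k + k" by (metis evenE mult_2)
    then have "laplacian_moment Q m = trace (laplacian Q ** X k ** X k)"
      by (simp add: laplacian_moment_def X_def matpow_add matrix_mul_assoc)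
    then show ?thesis
      using trace_laplacian_square_nonneg[OF Q(1,2) X] by (simp add: laplacian_def)
  next
    case False
    then obtain k where "m = Suc (k + k)" by (metis oddE mult_2 Suc_eq_plus1)
    then have "laplacian_moment Q m = trace (laplacian Q ** lazy_walk Q ** X k ** X k)"
      by (simp add: laplacian_moment_def X_def matpow_add matrix_mul_assoc)
    also have "\<dots> = (real CARD('e) - 4) / real CARD('e) * trace (laplacian Q ** X k ** X k)
        + 2 / real CARD('e) * trace (laplacian (Q ** Q) ** X k ** X k)"
      unfolding laplacian_mult_lazy_walk
      by (simp add: matrix_add_rdistrib scalar_matrix_assoc[symmetric] trace_add trace_scaleR)
    finally show ?thesis
      using trace_laplacian_square_nonneg[OF Q(1,2) X] trace_laplacian_square_nonneg[OF QQ X] Q(3)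
      by (simp add: laplacian_def)
  qed
qed

lemma sum_laplacian_moment:
  fixes Q :: "real^'e::finite^'e"
  shows "(\<Sum>m<M. laplacian_moment Q m)
    = real CARD('e) / 2 * (real CARD('e) - trace (matpow (lazy_walk Q) M))"
proof -
  have tele: "laplacian_moment Q m = real CARD('e) / 2
      * (trace (matpow (lazy_walk Q) m) - trace (matpow (lazy_walk Q) (Suc m)))" for m
    unfolding laplacian_moment_def laplacian_eq_lazy_walk
    by (simp add: scalar_matrix_assoc[symmetric] matrix_diff_rdistrib trace_scaleR trace_sub)
  have "(\<Sum>m<M. laplacian_moment Q m) = real CARD('e) / 2
      * (\<Sum>m<M. trace (matpow (lazy_walk Q) m) - trace (matpow (lazy_walk Q) (Suc m)))"
    by (simp only: tele sum_distrib_left)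
  also have "\<dots> = real CARD('e) / 2 * (real CARD('e) - trace (matpow (lazy_walk Q) M))"
    by (subst sum_lessThan_telescope') (simp add: trace_I)
  finally show ?thesis .
qed

lemma sum_laplacian_moment_le:
  fixes Q :: "real^'e::finite^'e"
  assumes "stochastic Q" "2 \<le> CARD('e)"
  shows "(\<Sum>m<M. laplacian_moment Q m) \<le> (real CARD('e))^2 / 2"
proof -
  have "stochastic (matpow (lazy_walk Q) M)"
    by (intro stochastic_matpow stochastic_lazy_walk assms)
  then have "0 \<le> trace (matpow (lazy_walk Q) M)"
    unfolding trace_def stochastic_def by (simp add: sum_nonneg)
  then show ?thesis by (simp add: sum_laplacian_moment power2_eq_square mult_left_le)
qed

section \<open>The recursion for alpha as a polynomial recursion\<close>

lemma alpha_row_eq_0: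
  fixes Q :: "real^'e::finite^'e"
  shows "n < s \<Longrightarrow> alpha_row Q n s = 0"
proof (induction n arbitrary: s)
  case (Suc n)
  then have "s \<noteq> 0" "s \<noteq> 1" "n < s" "n < s - 1" by auto
  then show ?case using Suc.IH by (simp add: Let_def)
qed simp

definition alpha_forcing :: "real^'e::finite^'e \<Rightarrow> nat \<Rightarrow> real" where
  "alpha_forcing Q n = 2 / (real CARD('e))^2 * (1 + (\<Sum>s\<le>n. alpha Q n s * trace (matpow Q s)))"

lemma alpha_Suc:
  fixes Q :: "real^'e::finite^'e"
  defines "N \<equiv> real CARD('e)"
  shows "alpha Q (Suc n) s = alpha_forcing Q n * (if s = 0 then 1 else if s = 1 then -1 else 0)
     + (N - 2) / N * alpha Q n s + (if s = 0 then 0 else 2 / N * alpha Q n (s - 1))"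
proof -
  have "(\<Sum>s. alpha_row Q n (Suc s) * trace (matpow Q (Suc s)))
      = (\<Sum>s<n. alpha_row Q n (Suc s) * trace (matpow Q (Suc s)))"
    by (rule suminf_finite) (auto simp: alpha_row_eq_0)
  moreover have "(\<Sum>s\<le>n. alpha Q n s * trace (matpow Q s))
      = alpha Q n 0 * N + (\<Sum>s<n. alpha_row Q n (Suc s) * trace (matpow Q (Suc s)))"
    unfolding lessThan_Suc_atMost[symmetric]
    by (subst sum.lessThan_Suc_shift) (simp add: alpha_def trace_I N_def)
  moreover have "N > 0" by (simp add: N_def)
  ultimately show ?thesis
    by (auto simp: alpha_forcing_def alpha_def Let_def N_def[symmetric] field_simps power2_eq_square)
qed

lemma alpha_orbit_sum_Suc:
  fixes Q :: "real^'e::finite^'e" and u :: "nat \<Rightarrow> 'v::real_vector"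
  assumes L: "linear L" and orbit: "\<And>s. u (Suc s) = L (u s)"
  defines "N \<equiv> real CARD('e)"
  shows "(\<Sum>s\<le>Suc n. alpha Q (Suc n) s *\<^sub>R u s) = alpha_forcing Q n *\<^sub>R (u 0 - u 1)
     + ((N - 2) / N) *\<^sub>R (\<Sum>s\<le>n. alpha Q n s *\<^sub>R u s) + (2 / N) *\<^sub>R L (\<Sum>s\<le>n. alpha Q n s *\<^sub>R u s)"
proof -
  let ?c = "alpha_forcing Q n"
  have "(\<Sum>s\<le>Suc n. alpha Q (Suc n) s *\<^sub>R u s) =
     (\<Sum>s\<le>Suc n. (?c * (if s = 0 then 1 else if s = 1 then -1 else 0)) *\<^sub>R u s)
   + (\<Sum>s\<le>Suc n. ((N - 2) / N * alpha Q n s) *\<^sub>R u s)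
   + (\<Sum>s\<le>Suc n. (if s = 0 then 0 else 2 / N * alpha Q n (s - 1)) *\<^sub>R u s)"
    unfolding alpha_Suc N_def scaleR_add_left sum.distrib by simp
  also have "(\<Sum>s\<le>Suc n. (?c * (if s = 0 then 1 else if s = 1 then -1 else 0)) *\<^sub>R u s)
      = ?c *\<^sub>R (u 0 - u 1)"
  proof -
    have "(\<Sum>s\<le>n. (?c * (if Suc s = 1 then -1 else 0)) *\<^sub>R u (Suc s)) = - ?c *\<^sub>R u 1"
      by (simp add: if_distrib if_distribR sum.delta cong: if_cong)
    then show ?thesis by (subst sum.atMost_Suc_shift) (simp add: algebra_simps)
  qed
  also have "(\<Sum>s\<le>Suc n. ((N - 2) / N * alpha Q n s) *\<^sub>R u s)
      = ((N - 2) / N) *\<^sub>R (\<Sum>s\<le>n. alpha Q n s *\<^sub>R u s)"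
    by (simp add: alpha_def alpha_row_eq_0 scaleR_sum_right)
  also have "(\<Sum>s\<le>Suc n. (if s = 0 then 0 else 2 / N * alpha Q n (s - 1)) *\<^sub>R u s)
      = (2 / N) *\<^sub>R L (\<Sum>s\<le>n. alpha Q n s *\<^sub>R u s)"
    by (subst sum.atMost_Suc_shift) (simp add: orbit linear_sum[OF L] linear_scale[OF L] scaleR_sum_right)
  finally show ?thesis .
qed

definition alpha_matpoly :: "real^'e::finite^'e \<Rightarrow> nat \<Rightarrow> real^'e^'e" where
  "alpha_matpoly Q n = (\<Sum>s\<le>n. alpha Q n s *\<^sub>R matpow Q s)"

lemma alpha_matpoly_0: "alpha_matpoly Q 0 = 0"
  by (simp add: alpha_matpoly_def alpha_def)

lemma alpha_matpoly_Suc: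
  "alpha_matpoly Q (Suc n) = alpha_forcing Q n *\<^sub>R laplacian Q + lazy_walk Q ** alpha_matpoly Q n"
  unfolding alpha_matpoly_def
  by (subst alpha_orbit_sum_Suc[where L = "\<lambda>B. Q ** B", OF linear_matrix_mult_left])
     (simp_all add: laplacian_def lazy_walk_def matrix_add_rdistrib scalar_matrix_assoc[symmetric])

lemma alpha_forcing_eq_trace:
  fixes Q :: "real^'e::finite^'e"
  shows "alpha_forcing Q n = 2 / (real CARD('e))^2 * (1 + trace (alpha_matpoly Q n))"
  by (simp add: alpha_forcing_def alpha_matpoly_def trace_sum trace_scaleR)

lemma alpha_matpoly_eq:
  "alpha_matpoly Q n
    = (\<Sum>k<n. alpha_forcing Q k *\<^sub>R (laplacian Q ** matpow (lazy_walk Q) (n - 1 - k)))"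
proof (induction n)
  case 0 then show ?case by (simp add: alpha_matpoly_0)
next
  case (Suc n)
  have "lazy_walk Q ** alpha_matpoly Q n
      = (\<Sum>k<n. alpha_forcing Q k *\<^sub>R (laplacian Q ** matpow (lazy_walk Q) (Suc n - 1 - k)))"
    unfolding Suc.IH linear_sum[OF linear_matrix_mult_left]
  proof (rule sum.cong)
    fix k assume "k \<in> {..<n}"
    then have "Suc (n - 1 - k) = Suc n - 1 - k" by auto
    then show "lazy_walk Q ** (alpha_forcing Q k *\<^sub>R (laplacian Q ** matpow (lazy_walk Q) (n - 1 - k)))
        = alpha_forcing Q k *\<^sub>R (laplacian Q ** matpow (lazy_walk Q) (Suc n - 1 - k))"
      by (simp only: matrix_scalar_ac scalar_matrix_assoc[symmetric] lazy_walk_mult_laplacian_matpow)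
  qed simp
  then show ?case by (simp add: alpha_matpoly_Suc)
qed

lemma alpha_forcing_renewal:
  fixes Q :: "real^'e::finite^'e"
  shows "alpha_forcing Q n
    = 2 / (real CARD('e))^2 * (1 + (\<Sum>k<n. alpha_forcing Q k * laplacian_moment Q (n - 1 - k)))"
  by (subst alpha_forcing_eq_trace) (simp only: alpha_matpoly_eq trace_sum trace_scaleR laplacian_moment_def)

section \<open>Growth bounds\<close>

lemma abs_convolution_le:
  fixes c w :: "nat \<Rightarrow> real"
  assumes w: "\<And>m. 0 \<le> w m" and c: "\<And>k. k < n \<Longrightarrow> \<bar>c k\<bar> \<le> b"
  shows "\<bar>\<Sum>k<n. c k * w (n - 1 - k)\<bar> \<le> b * (\<Sum>k<n. w k)"
proof -
  have "\<bar>\<Sum>k<n. c k * w (n - 1 - k)\<bar> \<le> (\<Sum>k<n. b * w (n - Suc k))"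
  proof (rule order_trans[OF sum_abs sum_mono])
    fix k assume "k \<in> {..<n}"
    then show "\<bar>c k * w (n - 1 - k)\<bar> \<le> b * w (n - Suc k)"
      using c w by (simp add: abs_mult abs_of_nonneg mult_right_mono)
  qed
  also have "\<dots> = b * (\<Sum>k<n. w k)"
    by (simp only: sum.nat_diff_reindex flip: sum_distrib_left)
  finally show ?thesis .
qed

lemma abs_alpha_forcing_le:
  fixes Q :: "real^'e::finite^'e"
  assumes Q: "stochastic Q" "symmetric_mat Q" "4 \<le> CARD('e)"
  shows "\<bar>alpha_forcing Q n\<bar> \<le> 2 * (real n + 1) / (real CARD('e))^2"
proof (induction n rule: less_induct)
  case (less n)
  define N where "N = real CARD('e)"
  have N: "N > 0" by (simp add: N_def)
  let ?w = "laplacian_moment Q"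
  have "\<bar>\<Sum>k<n. alpha_forcing Q k * ?w (n - 1 - k)\<bar> \<le> 2 * real n / N^2 * (\<Sum>k<n. ?w k)"
  proof (rule abs_convolution_le)
    show "0 \<le> ?w m" for m by (rule laplacian_moment_nonneg[OF Q])
    show "\<bar>alpha_forcing Q k\<bar> \<le> 2 * real n / N^2" if k: "k < n" for k
    proof -
      have "2 * (real k + 1) \<le> 2 * real n" using k by simp
      then show ?thesis
        using less[OF k] by (simp add: N_def) (meson divide_right_mono order_trans zero_le_power2)
    qed
  qed
  also have "\<dots> \<le> 2 * real n / N^2 * (N^2 / 2)"
    using sum_laplacian_moment_le[OF Q(1), of n] Q(3) by (intro mult_left_mono) (simp_all add: N_def)
  also have "\<dots> = real n" using N by simp
  finally have b: "\<bar>1 + (\<Sum>k<n. alpha_forcing Q k * ?w (n - 1 - k))\<bar> \<le> 1 + real n" by linarith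
  have "\<bar>alpha_forcing Q n\<bar> = 2 / N^2 * \<bar>1 + (\<Sum>k<n. alpha_forcing Q k * ?w (n - 1 - k))\<bar>"
    by (subst alpha_forcing_renewal)
      (simp only: N_def abs_mult abs_divide abs_of_nonneg zero_le_divide_iff zero_le_power2 zero_le_numeral)
  also have "\<dots> \<le> 2 / N^2 * (1 + real n)"
    using b by (intro mult_left_mono) auto
  finally show ?case by (simp add: N_def algebra_simps)
qed

lemma abs_alpha_forcing_le_linear:
  fixes Q :: "real^'e::finite^'e"
  assumes Q: "stochastic Q" "symmetric_mat Q" "4 \<le> CARD('e)"
  shows "\<bar>alpha_forcing Q n\<bar> \<le> real n + 1"
proof -
  have "(4::real)^2 \<le> (real CARD('e))^2" by (rule power_mono) (use Q(3) in auto)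
  then have "2 \<le> (real CARD('e))^2" by simp
  then have "2 * (real n + 1) \<le> (real n + 1) * (real CARD('e))^2"
    by (metis mult.commute mult_left_mono of_nat_0_le_iff add_nonneg_nonneg zero_le_one)
  then have "2 * (real n + 1) / (real CARD('e))^2 \<le> real n + 1" by (simp add: field_simps)
  then show ?thesis using abs_alpha_forcing_le[OF Q, of n] by linarith
qed

lemma sum_abs_alpha_Suc_le:
  fixes Q :: "real^'e::finite^'e"
  assumes N2: "2 \<le> CARD('e)"
  shows "(\<Sum>s\<le>Suc n. \<bar>alpha Q (Suc n) s\<bar>) \<le> 2 * \<bar>alpha_forcing Q n\<bar> + (\<Sum>s\<le>n. \<bar>alpha Q n s\<bar>)"
proof -
  define N where "N = real CARD('e)"
  have N: "2 \<le> N" using N2 by (simp add: N_def)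
  let ?c = "\<bar>alpha_forcing Q n\<bar>"
  have "(\<Sum>s\<le>Suc n. \<bar>alpha Q (Suc n) s\<bar>) \<le>
     (\<Sum>s\<le>Suc n. ?c * (if s = 0 then 1 else if s = 1 then 1 else 0))
   + (\<Sum>s\<le>Suc n. (N - 2) / N * \<bar>alpha Q n s\<bar>)
   + (\<Sum>s\<le>Suc n. (if s = 0 then 0 else 2 / N * \<bar>alpha Q n (s - 1)\<bar>))"
    unfolding sum.distrib[symmetric]
  proof (rule sum_mono)
    fix s
    have "\<bar>alpha Q (Suc n) s\<bar> \<le> \<bar>alpha_forcing Q n * (if s = 0 then 1 else if s = 1 then -1 else 0)\<bar>
        + \<bar>(N - 2) / N * alpha Q n s\<bar> + \<bar>(if s = 0 then 0 else 2 / N * alpha Q n (s - 1))\<bar>"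
      unfolding alpha_Suc N_def[symmetric]
      by (rule order_trans[OF abs_triangle_ineq add_right_mono[OF abs_triangle_ineq]])
    also have "\<dots> = ?c * (if s = 0 then 1 else if s = 1 then 1 else 0)
        + (N - 2) / N * \<bar>alpha Q n s\<bar> + (if s = 0 then 0 else 2 / N * \<bar>alpha Q n (s - 1)\<bar>)"
      using N by (simp add: abs_mult)
    finally show "\<bar>alpha Q (Suc n) s\<bar> \<le> ?c * (if s = 0 then 1 else if s = 1 then 1 else 0)
        + (N - 2) / N * \<bar>alpha Q n s\<bar> + (if s = 0 then 0 else 2 / N * \<bar>alpha Q n (s - 1)\<bar>)" .
  qed
  also have "(\<Sum>s\<le>Suc n. ?c * (if s = 0 then 1 else if s = 1 then 1 else 0)) = 2 * ?c"
  proof -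
    have "(\<Sum>s\<le>n. ?c * (if Suc s = 1 then 1 else 0)) = ?c"
      by (simp add: if_distrib if_distribR sum.delta cong: if_cong)
    then show ?thesis by (subst sum.atMost_Suc_shift) simp
  qed
  also have "(\<Sum>s\<le>Suc n. (N - 2) / N * \<bar>alpha Q n s\<bar>) = (N - 2) / N * (\<Sum>s\<le>n. \<bar>alpha Q n s\<bar>)"
    by (simp add: alpha_def alpha_row_eq_0 sum_distrib_left)
  also have "(\<Sum>s\<le>Suc n. (if s = 0 then 0 else 2 / N * \<bar>alpha Q n (s - 1)\<bar>))
      = 2 / N * (\<Sum>s\<le>n. \<bar>alpha Q n s\<bar>)"
    by (subst sum.atMost_Suc_shift) (simp add: sum_distrib_left)
  also have "2 * ?c + (N - 2) / N * (\<Sum>s\<le>n. \<bar>alpha Q n s\<bar>) + 2 / N * (\<Sum>s\<le>n. \<bar>alpha Q n s\<bar>)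
     = 2 * ?c + (\<Sum>s\<le>n. \<bar>alpha Q n s\<bar>)"
    using N by (simp add: field_simps)
  finally show ?thesis .
qed

lemma sum_abs_alpha_le:
  fixes Q :: "real^'e::finite^'e"
  assumes Q: "stochastic Q" "symmetric_mat Q" "4 \<le> CARD('e)"
  shows "(\<Sum>s\<le>n. \<bar>alpha Q n s\<bar>) \<le> (real n + 1) * (real n + 2)"
proof (induction n)
  case 0 then show ?case by (simp add: alpha_def)
next
  case (Suc n)
  have "(\<Sum>s\<le>Suc n. \<bar>alpha Q (Suc n) s\<bar>) \<le> 2 * \<bar>alpha_forcing Q n\<bar> + (\<Sum>s\<le>n. \<bar>alpha Q n s\<bar>)"
    using Q(3) by (intro sum_abs_alpha_Suc_le) simp
  also have "\<dots> \<le> 2 * (real n + 1) + (real n + 1) * (real n + 2)"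
    using abs_alpha_forcing_le_linear[OF Q, of n] Suc.IH by (intro add_mono) auto
  also have "\<dots> \<le> (real (Suc n) + 1) * (real (Suc n) + 2)"
    by (simp add: algebra_simps)
  finally show ?case .
qed

lemma sum_abs_alpha_le_finite:
  fixes Q :: "real^'e::finite^'e"
  assumes Q: "stochastic Q" "symmetric_mat Q" "4 \<le> CARD('e)" and S: "finite S"
  shows "(\<Sum>s\<in>S. \<bar>alpha Q n s\<bar>) \<le> (real n + 1) * (real n + 2)"
proof -
  have "(\<Sum>s\<in>S. \<bar>alpha Q n s\<bar>) = (\<Sum>s\<in>S \<inter> {..n}. \<bar>alpha Q n s\<bar>)"
    using S by (intro sum.mono_neutral_right) (auto simp: alpha_def, meson alpha_row_eq_0 not_le)
  also have "\<dots> \<le> (\<Sum>s\<le>n. \<bar>alpha Q n s\<bar>)"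
    by (rule sum_mono2) auto
  also have "\<dots> \<le> (real n + 1) * (real n + 2)"
    by (rule sum_abs_alpha_le[OF Q])
  finally show ?thesis .
qed

lemma alpha_matpoly_component_le:
  fixes Q :: "real^'e::finite^'e"
  assumes Q: "stochastic Q" "symmetric_mat Q" "4 \<le> CARD('e)"
  shows "\<bar>alpha_matpoly Q n $ i $ j\<bar> \<le> (real n + 1) * (real n + 2)"
proof -
  have "\<bar>alpha_matpoly Q n $ i $ j\<bar> = \<bar>\<Sum>s\<le>n. alpha Q n s * matpow Q s $ i $ j\<bar>"
    by (simp add: alpha_matpoly_def sum_component)
  also have "\<dots> \<le> (\<Sum>s\<le>n. \<bar>alpha Q n s\<bar>)"
  proof (rule order_trans[OF sum_abs sum_mono])
    fix s
    have "stochastic (matpow Q s)" by (rule stochastic_matpow[OF Q(1)])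
    then have "\<bar>matpow Q s $ i $ j\<bar> \<le> 1"
      using stochastic_component_le_1 by (auto simp: stochastic_def)
    then show "\<bar>alpha Q n s * matpow Q s $ i $ j\<bar> \<le> \<bar>alpha Q n s\<bar>"
      by (simp add: abs_mult mult_left_le)
  qed
  also have "\<dots> \<le> (real n + 1) * (real n + 2)" by (rule sum_abs_alpha_le[OF Q])
  finally show ?thesis .
qed

section \<open>Generating functions\<close>

lemma summable_quadratic_times_power:
  fixes x :: real
  assumes "\<bar>x\<bar> < 1"
  shows "summable (\<lambda>n. (real n + 1) * (real n + 2) * x ^ n)"
proof -
  have linear: "summable (\<lambda>n. real (Suc n) * y ^ n)" if "norm y < 1" for y :: real
  proof -
    have "summable (\<lambda>n. diffs (\<lambda>_. 1::real) n * y ^ n)"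
      by (rule termdiff_converges[of y 1]) (use that summable_geometric in auto)
    then show ?thesis by (simp add: diffs_def)
  qed
  have "summable (\<lambda>n. diffs (\<lambda>n. real (Suc n)) n * x ^ n)"
    by (rule termdiff_converges[of x 1]) (use assms linear in auto)
  then show ?thesis by (simp add: diffs_def mult.assoc add.commute)
qed

lemma summable_power_mult_quadratic_bound:
  fixes z :: complex
  assumes z: "norm z < 1" and a: "\<And>n. norm (a n) \<le> (real n + 1) * (real n + 2)"
  shows "summable (\<lambda>n. z^n * a n)"
proof (rule summable_comparison_test'[OF summable_quadratic_times_power[of "norm z"]])
  show "norm (z^n * a n) \<le> (real n + 1) * (real n + 2) * norm z ^ n" for n
    using mult_left_mono[OF a[of n], of "norm z ^ n"] by (simp add: norm_mult norm_power mult_ac)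
qed (use z in simp)

lemma suminf_power_mult_shift:
  fixes z :: complex
  assumes "summable (\<lambda>n. z^n * a n)" "summable (\<lambda>n. z^n * h n)"
    and "a 0 = 0" "\<And>n. a (Suc n) = h n"
  shows "(\<Sum>n. z^n * a n) = z * (\<Sum>n. z^n * h n)"
proof -
  have "(\<Sum>n. z^Suc n * a (Suc n)) = (\<Sum>n. z^n * a n) - z^0 * a 0"
    by (rule suminf_split_head[OF assms(1)])
  moreover have "(\<Sum>n. z^Suc n * a (Suc n)) = z * (\<Sum>n. z^n * h n)"
    unfolding assms(4) by (subst suminf_mult[OF assms(2), symmetric]) (simp add: mult.assoc)
  ultimately show ?thesis using assms(3) by simp
qed

lemma alpha_gf_abs_summable:
  fixes Q :: "real^'e::finite^'e" and \<zeta> q :: complex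
  assumes Q: "stochastic Q" "symmetric_mat Q" "4 \<le> CARD('e)"
    and \<zeta>: "norm \<zeta> < 1" and q: "norm q \<le> 1"
  shows "(\<lambda>(n, s). norm (\<zeta>^n * q^s * complex_of_real (alpha Q n s))) summable_on UNIV"
proof (rule nonneg_bdd_above_summable_on)
  let ?f = "\<lambda>(n, s). norm (\<zeta>^n * q^s * complex_of_real (alpha Q n s))"
  let ?b = "\<lambda>n. (real n + 1) * (real n + 2) * norm \<zeta> ^ n"
  show "bdd_above (sum ?f ` {F. F \<subseteq> UNIV \<and> finite F})"
  proof (rule bdd_aboveI2)
    fix F :: "(nat \<times> nat) set" assume "F \<in> {F. F \<subseteq> UNIV \<and> finite F}"
    then have "finite (fst ` F \<union> snd ` F)" by simp
    then obtain K where "\<forall>x \<in> fst ` F \<union> snd ` F. x \<le> K"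
      using finite_nat_set_iff_bounded_le by blast
    then have "F \<subseteq> {..K} \<times> {..K}" by force
    then have "sum ?f F \<le> sum ?f ({..K} \<times> {..K})"
      by (intro sum_mono2) auto
    also have "\<dots> \<le> (\<Sum>n\<le>K. norm \<zeta> ^ n * (\<Sum>s\<le>K. \<bar>alpha Q n s\<bar>))"
    proof -
      have "?f (n, s) \<le> norm \<zeta> ^ n * \<bar>alpha Q n s\<bar>" for n s
      proof -
        have "norm q ^ s \<le> 1" using q by (simp add: power_le_one)
        then have "norm q ^ s * \<bar>alpha Q n s\<bar> \<le> \<bar>alpha Q n s\<bar>"
          by (simp add: mult_left_le_one_le)
        then show ?thesis by (simp add: norm_mult norm_power mult_left_mono mult.assoc)
      qed
      then show ?thesis
        unfolding sum.cartesian_product[symmetric] sum_distrib_left by (intro sum_mono) auto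
    qed
    also have "\<dots> \<le> (\<Sum>n\<le>K. ?b n)"
      using sum_abs_alpha_le_finite[OF Q, of "{..K}"]
      by (intro sum_mono) (simp add: mult_left_mono mult.commute)
    also have "\<dots> \<le> (\<Sum>n. ?b n)"
      by (intro sum_le_suminf summable_quadratic_times_power) (use \<zeta> in auto)
    finally show "sum ?f F \<le> (\<Sum>n. ?b n)" .
  qed
qed auto

definition alpha_poly :: "real^'e::finite^'e \<Rightarrow> nat \<Rightarrow> complex \<Rightarrow> complex" where
  "alpha_poly Q n q = (\<Sum>s\<le>n. q^s * complex_of_real (alpha Q n s))"

lemma Galpha_eq_suminf_alpha_poly: "Galpha Q \<zeta> q = (\<Sum>n. \<zeta>^n * alpha_poly Q n q)"
proof -
  have "(\<Sum>s. q^s * complex_of_real (alpha Q n s)) = alpha_poly Q n q" for n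
    unfolding alpha_poly_def by (rule suminf_finite) (auto simp: alpha_def alpha_row_eq_0)
  then show ?thesis by (simp add: Galpha_def)
qed

lemma alpha_poly_0: "alpha_poly Q 0 q = 0"
  by (simp add: alpha_poly_def alpha_def)

lemma alpha_poly_Suc:
  fixes Q :: "real^'e::finite^'e"
  defines "N \<equiv> of_nat CARD('e) :: complex"
  shows "alpha_poly Q (Suc n) q
    = (1 - q) * complex_of_real (alpha_forcing Q n) + (N - 2 + 2 * q) / N * alpha_poly Q n q"
proof -
  have "linear (\<lambda>w::complex. q * w)"
    by (rule linearI) (simp_all add: algebra_simps scaleR_conv_of_real)
  moreover have "alpha_poly Q n q = (\<Sum>s\<le>n. alpha Q n s *\<^sub>R q^s)" for n
    unfolding alpha_poly_def by (simp add: scaleR_conv_of_real mult.commute)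
  ultimately show ?thesis
    using alpha_orbit_sum_Suc[of "\<lambda>w. q * w" "\<lambda>s. q^s" Q n]
    by (simp add: scaleR_conv_of_real N_def field_simps)
qed

lemma norm_alpha_poly_le:
  fixes Q :: "real^'e::finite^'e"
  assumes Q: "stochastic Q" "symmetric_mat Q" "4 \<le> CARD('e)" and q: "norm q \<le> 1"
  shows "norm (alpha_poly Q n q) \<le> (real n + 1) * (real n + 2)"
proof -
  have "norm (alpha_poly Q n q) \<le> (\<Sum>s\<le>n. norm (q^s * complex_of_real (alpha Q n s)))"
    unfolding alpha_poly_def by (rule norm_sum)
  also have "\<dots> \<le> (\<Sum>s\<le>n. \<bar>alpha Q n s\<bar>)"
    using q by (intro sum_mono) (simp add: norm_mult norm_power power_le_one mult_left_le_one_le)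
  also have "\<dots> \<le> (real n + 1) * (real n + 2)" by (rule sum_abs_alpha_le[OF Q])
  finally show ?thesis .
qed

definition forcing_gf :: "real^'e::finite^'e \<Rightarrow> complex \<Rightarrow> complex" where
  "forcing_gf Q \<zeta> = (\<Sum>n. \<zeta>^n * complex_of_real (alpha_forcing Q n))"

lemma summable_forcing_gf:
  fixes Q :: "real^'e::finite^'e"
  assumes Q: "stochastic Q" "symmetric_mat Q" "4 \<le> CARD('e)" and \<zeta>: "norm \<zeta> < 1"
  shows "summable (\<lambda>n. \<zeta>^n * complex_of_real (alpha_forcing Q n))"
proof (rule summable_power_mult_quadratic_bound[OF \<zeta>])
  fix n
  have "\<bar>alpha_forcing Q n\<bar> \<le> real n + 1" by (rule abs_alpha_forcing_le_linear[OF Q])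
  also have "\<dots> \<le> (real n + 1) * (real n + 2)" by (simp add: algebra_simps)
  finally show "norm (complex_of_real (alpha_forcing Q n)) \<le> (real n + 1) * (real n + 2)" by simp
qed

lemma Galpha_recursion:
  fixes Q :: "real^'e::finite^'e" and \<zeta> q :: complex
  assumes Q: "stochastic Q" "symmetric_mat Q" "4 \<le> CARD('e)"
    and \<zeta>: "norm \<zeta> < 1" and q: "norm q \<le> 1"
  defines "N \<equiv> of_nat CARD('e) :: complex"
  shows "Galpha Q \<zeta> q = \<zeta> * ((1 - q) * forcing_gf Q \<zeta> + (N - 2 + 2 * q) / N * Galpha Q \<zeta> q)"
proof -
  let ?A = "\<lambda>n. alpha_poly Q n q" and ?c = "\<lambda>n. complex_of_real (alpha_forcing Q n)"
  define r where "r = (N - 2 + 2 * q) / N"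
  have sA: "summable (\<lambda>n. \<zeta>^n * ?A n)"
    by (rule summable_power_mult_quadratic_bound[OF \<zeta> norm_alpha_poly_le[OF Q q]])
  have sc: "summable (\<lambda>n. \<zeta>^n * ?c n)" by (rule summable_forcing_gf[OF Q \<zeta>])
  have sh: "summable (\<lambda>n. \<zeta>^n * ((1 - q) * ?c n + r * ?A n))"
    using summable_mult[OF sc, of "1 - q"] summable_mult[OF sA, of r]
    by (simp add: distrib_left summable_add mult_ac)
  have "Galpha Q \<zeta> q = \<zeta> * (\<Sum>n. \<zeta>^n * ((1 - q) * ?c n + r * ?A n))"
    unfolding Galpha_eq_suminf_alpha_poly
    by (rule suminf_power_mult_shift[OF sA sh alpha_poly_0]) (simp add: alpha_poly_Suc r_def N_def)
  also have "(\<Sum>n. \<zeta>^n * ((1 - q) * ?c n + r * ?A n))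
      = (1 - q) * (\<Sum>n. \<zeta>^n * ?c n) + r * (\<Sum>n. \<zeta>^n * ?A n)"
  proof -
    have "(\<Sum>n. \<zeta>^n * ((1 - q) * ?c n + r * ?A n))
        = (\<Sum>n. (1 - q) * (\<zeta>^n * ?c n) + r * (\<zeta>^n * ?A n))"
      by (simp add: algebra_simps)
    also have "\<dots> = (\<Sum>n. (1 - q) * (\<zeta>^n * ?c n)) + (\<Sum>n. r * (\<zeta>^n * ?A n))"
      by (rule suminf_add[symmetric]) (intro summable_mult sc sA)+
    finally show ?thesis by (simp add: suminf_mult[OF sc] suminf_mult[OF sA])
  qed
  finally show ?thesis
    by (simp add: forcing_gf_def Galpha_eq_suminf_alpha_poly r_def)
qed

definition matpoly_gf :: "real^'e::finite^'e \<Rightarrow> complex \<Rightarrow> complex^'e^'e" where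
  "matpoly_gf Q \<zeta> = (\<chi> i j. \<Sum>n. \<zeta>^n * complex_of_real (alpha_matpoly Q n $ i $ j))"

lemma matpoly_gf_component_eq:
  fixes Q :: "real^'e::finite^'e" and \<zeta> :: complex
  assumes Q: "stochastic Q" "symmetric_mat Q" "4 \<le> CARD('e)" and \<zeta>: "norm \<zeta> < 1"
  shows "matpoly_gf Q \<zeta> $ i $ j = \<zeta> * (forcing_gf Q \<zeta> * complex_of_real (laplacian Q $ i $ j)
    + (\<Sum>k\<in>UNIV. complex_of_real (lazy_walk Q $ i $ k) * matpoly_gf Q \<zeta> $ k $ j))"
proof -
  let ?P = "\<lambda>n i j. complex_of_real (alpha_matpoly Q n $ i $ j)"
  let ?c = "\<lambda>n. complex_of_real (alpha_forcing Q n)"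
  let ?D = "complex_of_real (laplacian Q $ i $ j)" and ?R = "\<lambda>k. complex_of_real (lazy_walk Q $ i $ k)"
  have sP: "summable (\<lambda>n. \<zeta>^n * ?P n i j)" for i j
    using alpha_matpoly_component_le[OF Q] by (intro summable_power_mult_quadratic_bound[OF \<zeta>]) simp
  have sc: "summable (\<lambda>n. \<zeta>^n * ?c n)" by (rule summable_forcing_gf[OF Q \<zeta>])
  have sh: "summable (\<lambda>n. \<zeta>^n * (?c n * ?D + (\<Sum>k\<in>UNIV. ?R k * ?P n k j)))"
    unfolding distrib_left sum_distrib_left
    using summable_mult2[OF sc, of ?D] summable_mult[OF sP, of "?R k" for k]
    by (intro summable_add summable_sum) (simp_all add: mult_ac)
  have "matpoly_gf Q \<zeta> $ i $ j = \<zeta> * (\<Sum>n. \<zeta>^n * (?c n * ?D + (\<Sum>k\<in>UNIV. ?R k * ?P n k j)))"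
    unfolding matpoly_gf_def vec_lambda_beta
    by (rule suminf_power_mult_shift[OF sP sh])
      (simp_all add: alpha_matpoly_0 alpha_matpoly_Suc matrix_mult_component)
  also have "(\<Sum>n. \<zeta>^n * (?c n * ?D + (\<Sum>k\<in>UNIV. ?R k * ?P n k j)))
      = (\<Sum>n. (\<zeta>^n * ?c n) * ?D + (\<Sum>k\<in>UNIV. ?R k * (\<zeta>^n * ?P n k j)))"
    by (simp add: algebra_simps sum_distrib_left)
  also have "\<dots> = (\<Sum>n. (\<zeta>^n * ?c n) * ?D) + (\<Sum>n. \<Sum>k\<in>UNIV. ?R k * (\<zeta>^n * ?P n k j))"
    by (rule suminf_add[symmetric]) (intro summable_mult2 summable_sum summable_mult sc sP)+
  also have "\<dots> = forcing_gf Q \<zeta> * ?D + (\<Sum>k\<in>UNIV. ?R k * matpoly_gf Q \<zeta> $ k $ j)"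
    unfolding forcing_gf_def matpoly_gf_def
    by (simp add: suminf_mult2[OF sc] suminf_sum[OF summable_mult[OF sP]] suminf_mult[OF sP])
  finally show ?thesis .
qed

lemma matpoly_gf_eq:
  fixes Q :: "real^'e::finite^'e" and \<zeta> :: complex
  assumes Q: "stochastic Q" "symmetric_mat Q" "4 \<le> CARD('e)" and \<zeta>: "norm \<zeta> < 1"
  shows "matpoly_gf Q \<zeta> = mat \<zeta> ** (mat (forcing_gf Q \<zeta>) ** complex_mat (laplacian Q)
    + complex_mat (lazy_walk Q) ** matpoly_gf Q \<zeta>)"
  unfolding vec_eq_iff mat_mult_component[of \<zeta>] vector_add_component mat_mult_component
    matrix_mult_component[of "complex_mat (lazy_walk Q)"] complex_mat_component
  by (intro allI matpoly_gf_component_eq[OF Q \<zeta>])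

lemma forcing_gf_eq_trace:
  fixes Q :: "real^'e::finite^'e" and \<zeta> :: complex
  assumes Q: "stochastic Q" "symmetric_mat Q" "4 \<le> CARD('e)" and \<zeta>: "norm \<zeta> < 1"
  shows "forcing_gf Q \<zeta> = 2 / (of_nat CARD('e))^2 * (1 / (1 - \<zeta>) + trace (matpoly_gf Q \<zeta>))"
proof -
  let ?P = "\<lambda>n i. \<zeta>^n * complex_of_real (alpha_matpoly Q n $ i $ i)"
  have sP: "summable (\<lambda>n. ?P n i)" for i
    using alpha_matpoly_component_le[OF Q] by (intro summable_power_mult_quadratic_bound[OF \<zeta>]) simp
  have "forcing_gf Q \<zeta> = (\<Sum>n. 2 / (of_nat CARD('e))^2 * (\<zeta>^n + (\<Sum>i\<in>UNIV. ?P n i)))"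
    unfolding forcing_gf_def alpha_forcing_eq_trace trace_def
    by (simp add: algebra_simps sum_distrib_left sum_divide_distrib)
  also have "\<dots> = 2 / (of_nat CARD('e))^2 * ((\<Sum>n. \<zeta>^n) + (\<Sum>n. \<Sum>i\<in>UNIV. ?P n i))"
    using \<zeta> by (subst suminf_mult)
      (intro summable_add summable_geometric summable_sum sP,
       simp_all add: suminf_add[OF summable_geometric summable_sum[OF sP]])
  also have "\<dots> = 2 / (of_nat CARD('e))^2 * (1 / (1 - \<zeta>) + trace (matpoly_gf Q \<zeta>))"
    unfolding matpoly_gf_def trace_def using \<zeta> by (simp add: suminf_geometric suminf_sum[OF sP])
  finally show ?thesis .
qed

section \<open>The matrix N - zeta (N - 2 + 2 Q)\<close>

definition walk_pencil :: "real^'e::finite^'e \<Rightarrow> complex \<Rightarrow> complex^'e^'e" where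
  "walk_pencil Q z
    = mat (of_nat CARD('e)) - mat z ** (mat (of_nat CARD('e) - 2) + mat 2 ** complex_mat Q)"

lemma walk_pencil_component:
  fixes Q :: "real^'e::finite^'e"
  shows "walk_pencil Q z $ i $ k = (if i = k then of_nat CARD('e) - z * (of_nat CARD('e) - 2) else 0)
    - 2 * z * complex_of_real (Q $ i $ k)"
  by (simp add: walk_pencil_def mat_component mat_mult_component algebra_simps)

lemma walk_pencil_eq_lazy_walk:
  fixes Q :: "real^'e::finite^'e"
  shows "walk_pencil Q z = mat (of_nat CARD('e)) ** (mat 1 - mat z ** complex_mat (lazy_walk Q))"
  by (simp add: vec_eq_iff walk_pencil_component mat_mult_component mat_component
      lazy_walk_component field_simps)

lemma laplacian_eq_walk_pencil:
  fixes Q :: "real^'e::finite^'e"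
  shows "mat (2 * z) ** complex_mat (laplacian Q) = walk_pencil Q z - mat (of_nat CARD('e) * (1 - z))"
  by (simp add: vec_eq_iff walk_pencil_component mat_mult_component mat_component laplacian_def
      algebra_simps)

lemma walk_pencil_mult_vector_component:
  fixes Q :: "real^'e::finite^'e"
  shows "(walk_pencil Q z *v v) $ i = (of_nat CARD('e) - z * (of_nat CARD('e) - 2)) * v $ i
    - 2 * z * (\<Sum>k\<in>UNIV. complex_of_real (Q $ i $ k) * v $ k)"
proof -
  let ?d = "of_nat CARD('e) - z * (of_nat CARD('e) - 2)"
  have "(walk_pencil Q z *v v) $ i = (\<Sum>k\<in>UNIV. (if i = k then ?d else 0) * v $ k)
      - (\<Sum>k\<in>UNIV. 2 * z * complex_of_real (Q $ i $ k) * v $ k)"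
    by (simp add: matrix_vector_mult_def walk_pencil_component left_diff_distrib sum_subtractf)
  also have "(\<Sum>k\<in>UNIV. (if i = k then ?d else 0) * v $ k) = ?d * v $ i"
    by (simp add: if_distrib if_distribR cong: if_cong)
  finally show ?thesis by (simp add: sum_distrib_left mult.assoc)
qed

text \<open>Diagonal dominance: at a coordinate of maximal modulus, |N v_i| <= |z| N |v_i|.\<close>

lemma walk_pencil_kernel:
  fixes Q :: "real^'e::finite^'e" and v :: "complex^'e"
  assumes Q: "stochastic Q" and N2: "2 \<le> CARD('e)" and z: "norm z < 1"
    and v: "walk_pencil Q z *v v = 0"
  shows "v = 0"
proof -
  define N where "N = real CARD('e)"
  obtain i where i: "\<And>k. norm (v $ k) \<le> norm (v $ i)"
    using ex_max_norm_component[of v] by blast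
  let ?S = "\<Sum>k\<in>UNIV. complex_of_real (Q $ i $ k) * v $ k"
  have avg: "norm ?S \<le> norm (v $ i)" by (rule norm_stochastic_average_le[OF Q i])
  have eq: "complex_of_real N * v $ i = z * (complex_of_real (N - 2) * v $ i + 2 * ?S)"
    using arg_cong[OF v, of "\<lambda>w. w $ i"]
    unfolding walk_pencil_mult_vector_component by (simp add: N_def algebra_simps)
  have "N * norm (v $ i) = norm z * norm (complex_of_real (N - 2) * v $ i + 2 * ?S)"
    using arg_cong[OF eq, of norm] by (simp only: norm_mult norm_of_real) (simp add: N_def)
  also have "\<dots> \<le> norm z * ((N - 2) * norm (v $ i) + 2 * norm (v $ i))"
  proof (rule mult_left_mono)
    have "norm (complex_of_real (N - 2) * v $ i + 2 * ?S)
        \<le> norm (complex_of_real (N - 2) * v $ i) + norm (2 * ?S)"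
      by (rule norm_triangle_ineq)
    also have "\<dots> \<le> (N - 2) * norm (v $ i) + 2 * norm (v $ i)"
      using avg N2 by (simp only: norm_mult norm_of_real norm_numeral) (simp add: N_def)
    finally show "norm (complex_of_real (N - 2) * v $ i + 2 * ?S)
        \<le> (N - 2) * norm (v $ i) + 2 * norm (v $ i)" .
  qed simp
  finally have "(1 - norm z) * (N * norm (v $ i)) \<le> 0"
    by (simp add: algebra_simps)
  moreover have "0 < 1 - norm z" using z by simp
  ultimately have "N * norm (v $ i) \<le> 0" by (simp add: mult_le_0_iff)
  moreover have "N > 0" by (simp add: N_def)
  ultimately have "norm (v $ i) = 0" by (simp add: mult_le_0_iff)
  then show "v = 0" using i by (simp add: vec_eq_iff)
qed

lemma invertible_walk_pencil:
  fixes Q :: "real^'e::finite^'e"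
  assumes "stochastic Q" "2 \<le> CARD('e)" "norm z < 1"
  shows "invertible (walk_pencil Q z)"
proof -
  have "inj (\<lambda>x. walk_pencil Q z *v x)"
  proof (rule injI)
    fix x y assume "walk_pencil Q z *v x = walk_pencil Q z *v y"
    then have "walk_pencil Q z *v (x - y) = 0" by (simp add: matrix_vector_mult_diff_distrib)
    then have "x - y = 0" by (rule walk_pencil_kernel[OF assms])
    then show "x = y" by simp
  qed
  then have "det (walk_pencil Q z) \<noteq> 0"
    using det_nz_iff_inj_gen[of "\<lambda>x. walk_pencil Q z *v x"]
    by (simp add: matrix_vector_mul_linear_gen)
  then show ?thesis by (simp add: invertible_det_nz)
qed

lemma walk_pencil_mult_matpoly_gf:
  fixes Q :: "real^'e::finite^'e" and \<zeta> :: complex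
  assumes Q: "stochastic Q" "symmetric_mat Q" "4 \<le> CARD('e)" and \<zeta>: "norm \<zeta> < 1"
  shows "walk_pencil Q \<zeta> ** matpoly_gf Q \<zeta>
    = mat (of_nat CARD('e) * \<zeta> * forcing_gf Q \<zeta>) ** complex_mat (laplacian Q)"
proof -
  let ?E = "matpoly_gf Q \<zeta>" and ?R = "complex_mat (lazy_walk Q)"
  let ?D = "complex_mat (laplacian Q)" and ?C = "forcing_gf Q \<zeta>"
  have "?E - mat \<zeta> ** (?R ** ?E) = mat \<zeta> ** (mat ?C ** ?D)"
    using matpoly_gf_eq[OF Q \<zeta>] by (simp add: matrix_add_ldistrib algebra_simps)
  then have "(mat 1 - mat \<zeta> ** ?R) ** ?E = mat (\<zeta> * ?C) ** ?D"
    by (simp add: matrix_diff_rdistrib matrix_mul_assoc mat_mult_mat)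
  then have "mat (of_nat CARD('e)) ** ((mat 1 - mat \<zeta> ** ?R) ** ?E)
      = mat (of_nat CARD('e)) ** (mat (\<zeta> * ?C) ** ?D)"
    by simp
  then show ?thesis
    by (simp add: walk_pencil_eq_lazy_walk matrix_mul_assoc mat_mult_mat mult.assoc)
qed

lemma trace_matpoly_gf:
  fixes Q :: "real^'e::finite^'e" and \<zeta> :: complex
  assumes Q: "stochastic Q" "symmetric_mat Q" "4 \<le> CARD('e)" and \<zeta>: "norm \<zeta> < 1"
  defines "N \<equiv> of_nat CARD('e) :: complex"
  shows "2 * trace (matpoly_gf Q \<zeta>)
    = N * forcing_gf Q \<zeta> * (N - N * (1 - \<zeta>) * trace (matrix_inv (walk_pencil Q \<zeta>)))"
proof -
  let ?M = "walk_pencil Q \<zeta>" and ?E = "matpoly_gf Q \<zeta>"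
  let ?Mi = "matrix_inv ?M" and ?C = "forcing_gf Q \<zeta>"
  have "invertible ?M" using Q \<zeta> by (intro invertible_walk_pencil) simp_all
  then have inv_left: "?Mi ** ?M = mat 1" and inv_right: "?M ** ?Mi = mat 1"
    by (simp_all add: matrix_inv_mult_left matrix_inv_mult_right)
  have "mat 2 ** ?E = ?Mi ** (?M ** (mat 2 ** ?E))"
    by (simp add: matrix_mul_assoc inv_left)
  also have "?M ** (mat 2 ** ?E) = mat 2 ** (?M ** ?E)"
    by (simp only: matrix_mul_assoc mat_mult_commute[of 2 ?M])
  also have "\<dots> = mat (N * ?C) ** (mat (2 * \<zeta>) ** complex_mat (laplacian Q))"
    by (simp add: walk_pencil_mult_matpoly_gf[OF Q \<zeta>] matrix_mul_assoc mat_mult_mat mult_ac N_def)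
  also have "\<dots> = mat (N * ?C) ** (?M - mat (N * (1 - \<zeta>)))"
    by (simp add: laplacian_eq_walk_pencil N_def)
  finally have "trace (mat 2 ** ?E) = trace ((mat (N * ?C) ** (?M - mat (N * (1 - \<zeta>)))) ** ?Mi)"
    by (simp add: trace_mul_sym[of ?Mi])
  also have "\<dots> = trace (mat (N * ?C) ** (mat 1 - mat (N * (1 - \<zeta>)) ** ?Mi))"
    by (simp add: matrix_diff_rdistrib matrix_mul_assoc[symmetric] inv_right)
  finally show ?thesis
    by (simp add: trace_mat_mult matrix_diff_ldistrib trace_sub trace_mat N_def algebra_simps)
qed

lemma forcing_gf_identity:
  fixes Q :: "real^'e::finite^'e" and \<zeta> :: complex
  assumes Q: "stochastic Q" "symmetric_mat Q" "4 \<le> CARD('e)" and \<zeta>: "norm \<zeta> < 1"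
  shows "(of_nat CARD('e))^2 * forcing_gf Q \<zeta> * (1 - \<zeta>)^2 * trace (matrix_inv (walk_pencil Q \<zeta>)) = 2"
proof -
  define N where "N = (of_nat CARD('e) :: complex)"
  let ?C = "forcing_gf Q \<zeta>" and ?T = "trace (matrix_inv (walk_pencil Q \<zeta>))"
  have N: "N \<noteq> 0" by (simp add: N_def)
  have \<zeta>1: "1 - \<zeta> \<noteq> 0" using \<zeta> by auto
  have "N^2 * ?C = 2 / (1 - \<zeta>) + 2 * trace (matpoly_gf Q \<zeta>)"
    using forcing_gf_eq_trace[OF Q \<zeta>] N by (simp add: N_def field_simps)
  also have "\<dots> = 2 / (1 - \<zeta>) + N * ?C * (N - N * (1 - \<zeta>) * ?T)"
    using trace_matpoly_gf[OF Q \<zeta>] by (simp add: N_def)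
  finally have "N^2 * ?C * (1 - \<zeta>) * ?T = 2 / (1 - \<zeta>)"
    by (simp add: algebra_simps power2_eq_square)
  then show ?thesis using \<zeta>1 by (simp add: N_def field_simps power2_eq_square)
qed

lemma scalar_walk_pencil_nonzero:
  fixes \<zeta> q :: complex
  assumes n: "2 \<le> n" and \<zeta>: "norm \<zeta> < 1" and q: "norm q \<le> 1"
  shows "of_nat n - \<zeta> * (of_nat n - 2 + 2 * q) \<noteq> 0"
proof
  assume "of_nat n - \<zeta> * (of_nat n - 2 + 2 * q) = 0"
  then have eq: "real n = norm \<zeta> * norm (of_nat n - 2 + 2 * q)"
    by (metis eq_iff_diff_eq_0 norm_mult norm_of_nat)
  have "norm (of_nat n - 2 + 2 * q) \<le> norm (of_nat n - 2 :: complex) + norm (2 * q)"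
    by (rule norm_triangle_ineq)
  also have "\<dots> \<le> real n"
  proof -
    have "(of_nat n - 2 :: complex) = of_real (real n - 2)" by simp
    then have "norm (of_nat n - 2 :: complex) = real n - 2"
      using n by (simp only: norm_of_real)
    moreover have "norm (2 * q) \<le> 2" using q by (simp add: norm_mult)
    ultimately show ?thesis by simp
  qed
  finally have "real n \<le> norm \<zeta> * real n"
    by (subst eq) (rule mult_left_mono, simp_all)
  then show False using \<zeta> n by (simp add: mult_le_cancel_right1)
qed

lemma Galpha_closed_form:
  fixes Q :: "real^'e::finite^'e" and \<zeta> q :: complex
  assumes Q: "stochastic Q" "symmetric_mat Q" "4 \<le> CARD('e)"
    and \<zeta>: "norm \<zeta> < 1" and q: "norm q \<le> 1"
  defines "N \<equiv> of_nat CARD('e) :: complex"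
  shows "Galpha Q \<zeta> q = 2 * \<zeta> * (1 - q) * inverse (N - \<zeta> * (N - 2 + 2 * q))
    / (N * (1 - \<zeta>)^2 * trace (matrix_inv (walk_pencil Q \<zeta>)))"
proof -
  let ?G = "Galpha Q \<zeta> q" and ?C = "forcing_gf Q \<zeta>"
  let ?T = "trace (matrix_inv (walk_pencil Q \<zeta>))" and ?X = "N - \<zeta> * (N - 2 + 2 * q)"
  have N: "N \<noteq> 0" by (simp add: N_def)
  have \<zeta>1: "1 - \<zeta> \<noteq> 0" using \<zeta> by auto
  have X: "?X \<noteq> 0"
    unfolding N_def using Q(3) \<zeta> q by (intro scalar_walk_pencil_nonzero) simp_all
  have C: "N^2 * ?C * (1 - \<zeta>)^2 * ?T = 2"
    unfolding N_def by (rule forcing_gf_identity[OF Q \<zeta>])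
  then have T: "?T \<noteq> 0" by auto
  have "?G * N = \<zeta> * ((1 - q) * ?C * N + (N - 2 + 2 * q) * ?G)"
    using Galpha_recursion[OF Q \<zeta> q] N by (simp add: N_def field_simps)
  then have "?G * ?X = \<zeta> * (1 - q) * ?C * N"
    by (simp add: algebra_simps)
  then have "?G = \<zeta> * (1 - q) * ?C * N / ?X"
    using X by (simp add: field_simps)
  also have "?C = 2 / (N^2 * (1 - \<zeta>)^2 * ?T)"
    using C N \<zeta>1 T by (simp add: field_simps)
  finally have "?G = \<zeta> * (1 - q) * (2 / (N^2 * (1 - \<zeta>)^2 * ?T)) * N / ?X" .
  moreover have "\<zeta> * (1 - q) * (2 / (N^2 * W * ?T)) * N / ?X
      = 2 * \<zeta> * (1 - q) * inverse ?X / (N * W * ?T)" if "W \<noteq> 0" for W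
  proof -
    have "\<zeta> * (1 - q) * (2 / (N^2 * W * ?T)) * N = 2 * \<zeta> * (1 - q) / (N * W * ?T)"
      using N T that by (simp add: field_simps power2_eq_square)
    then show ?thesis by (simp only: divide_inverse mult_ac)
  qed
  ultimately show ?thesis using \<zeta>1 by simp
qed

theorem theorem3p2:
  fixes Q :: "real^'e::finite^'e" and \<zeta> q :: complex
  assumes "CARD('e) > 8"
    and "irreducible_mat Q" and "stochastic Q" and "symmetric_mat Q"
    and "trace Q = 0"
    and "norm \<zeta> < 1" and "norm q \<le> 1"
  shows "((\<lambda>(n, s). norm (\<zeta>^n * q^s * complex_of_real (alpha Q n s))) summable_on (UNIV :: (nat \<times> nat) set))
    \<and> Galpha Q \<zeta> q =
      2 * \<zeta> * (1 - q) * inverse (of_nat CARD('e) - \<zeta> * (of_nat CARD('e) - 2 + 2 * q))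
      / (of_nat CARD('e) * (1 - \<zeta>)^2 *
         trace (matrix_inv (mat (of_nat CARD('e)) -
            mat \<zeta> ** (mat (of_nat CARD('e) - 2) + mat 2 ** complex_mat Q))))"
proof -
  have Q: "stochastic Q" "symmetric_mat Q" "4 \<le> CARD('e)"
    using assms(1,3,4) by simp_all
  show ?thesis
    using alpha_gf_abs_summable[OF Q assms(6,7)] Galpha_closed_form[OF Q assms(6,7)]
    by (simp add: walk_pencil_def)
qed

end
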